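(* Let $A\in\mathbb{C}^{n\times n}$ with $k=\mathrm{Ind}(A)$, and let $m\in\mathbb{N}=\{1,2,\dots\}$. Then: (a) $A^{\#_m}=0$ if and only if $A^k=0$; (b) $A^{\#_m}=A$ if and only if $A$ is an EP tripotent matrix; (c) $A^{\#_m}=A^*$ if and only if $A$ is an EP partial isometry; (d) $A^{\#_m}=P_A$ if and only if $A$ is idempotent.
   Context: For $A\in\mathbb{C}^{n\times n}$: $A^*$ conjugate transpose, $A^\dagger$ Moore–Penrose inverse, $P_A=AA^\dagger$, $\mathcal{R}(\cdot)$ column space, $A^0=I_n$. $A$ is EP if $\mathcal{R}(A)=\mathcal{R}(A^* )$; tripotent if $A^3=A$; a partial isometry if $AA^*A=A$. The index $\mathrm{Ind}(A)$ is the smallest nonnegative integer $k$ with $\mathcal{R}(A^k)=\mathcal{R}(A^{k+1})$. The core-EP inverse $A^{\mathrm{cEP}}$ is the unique $X$ with $XAX=X$ and $\mathcal{R}(X)=\mathcal{R}(X^* )=\mathcal{R}(A^k)$. For $m\in\mathbb{N}$, the $m$-weak group inverse is $A^{\mathrm{WG}_m}:=(A^{\mathrm{cEP}})^{m+1}A^m$ and the $m$-weak core inverse is $A^{\#_m}:=A^{\mathrm{WG}_m}P_{A^m}$. *)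

theory Defs
  imports "HOL-Analysis.Analysis"
begin

definition cadj :: "complex^'n^'m \<Rightarrow> complex^'m^'n" where
  "cadj A = (\<chi> i j. cnj (A $ j $ i))"

primrec mpow :: "complex^'n^'n \<Rightarrow> nat \<Rightarrow> complex^'n^'n" where
  "mpow A 0 = mat 1"
| "mpow A (Suc k) = A ** mpow A k"

definition colsp :: "complex^'n^'m \<Rightarrow> (complex^'m) set" where
  "colsp A = range (\<lambda>x. A *v x)"

definition is_MP_inverse :: "complex^'n^'m \<Rightarrow> complex^'m^'n \<Rightarrow> bool" where
  "is_MP_inverse A X \<longleftrightarrow> A ** X ** A = A \<and> X ** A ** X = X
     \<and> cadj (A ** X) = A ** X \<and> cadj (X ** A) = X ** A"

definition MP :: "complex^'n^'m \<Rightarrow> complex^'m^'n" where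
  "MP A = (THE X. is_MP_inverse A X)"

definition projA :: "complex^'n^'n \<Rightarrow> complex^'n^'n" where
  "projA A = A ** MP A"

definition ind :: "complex^'n^'n \<Rightarrow> nat" where
  "ind A = (LEAST k. colsp (mpow A k) = colsp (mpow A (Suc k)))"

definition coreEP :: "complex^'n^'n \<Rightarrow> complex^'n^'n" where
  "coreEP A = (THE X. X ** A ** X = X \<and> colsp X = colsp (cadj X)
                     \<and> colsp X = colsp (mpow A (ind A)))"

definition WG :: "nat \<Rightarrow> complex^'n^'n \<Rightarrow> complex^'n^'n" where
  "WG m A = mpow (coreEP A) (m + 1) ** mpow A m"

definition wcore :: "nat \<Rightarrow> complex^'n^'n \<Rightarrow> complex^'n^'n" where
  "wcore m A = WG m A ** projA (mpow A m)"

definition is_EP :: "complex^'n^'n \<Rightarrow> bool" where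
  "is_EP A \<longleftrightarrow> colsp A = colsp (cadj A)"

definition tripotent :: "complex^'n^'n \<Rightarrow> bool" where
  "tripotent A \<longleftrightarrow> A ** A ** A = A"

definition partial_isometry :: "complex^'n^'n \<Rightarrow> bool" where
  "partial_isometry A \<longleftrightarrow> A ** cadj A ** A = A"

definition idempotent_mat :: "complex^'n^'n \<Rightarrow> bool" where
  "idempotent_mat A \<longleftrightarrow> A ** A = A"

end

theory Submission
  imports Defs
begin

text \<open>
  Let \<open>k = Ind(A)\<close>, \<open>B = A\<^sup>k\<close> and \<open>X = A\<^sup>c\<^sup>E\<^sup>P\<close>. The core-EP inverse is
  characterised by \<open>X A B = B\<close>, \<open>A X = P\<^sub>B\<close> and \<open>X = B V\<close>. For every \<open>m\<close> the
  weak core inverse \<open>W\<close> satisfies \<open>W A B = B\<close> and \<open>colsp W \<subseteq> colsp B\<close>; the first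
  fact gives (a). In (b), (c) and (d) the range of \<open>A\<close> lies in that of \<open>W\<close> (for (c)
  via the rank argument that \<open>colsp A\<^sup>* \<subseteq> colsp A\<close> forces \<open>A\<close> to be EP), hence in
  \<open>colsp A\<^sup>2\<close>, so \<open>Ind(A) \<le> 1\<close>. For such \<open>A\<close> and \<open>m \<ge> 1\<close> one has \<open>W = X\<close>, and each
  identity \<open>W = Y\<close> becomes the statement that \<open>Y\<close> satisfies the defining equations of
  the core-EP inverse, which unwind to the stated matrix identities.
\<close>

lemma cadj_cadj [simp]: "cadj (cadj A) = A"
  by (simp add: cadj_def vec_eq_iff)

lemma cadj_mult: "cadj (A ** B) = cadj B ** cadj A"
  by (simp add: cadj_def vec_eq_iff matrix_matrix_mult_def mult.commute)

lemma cadj_mat_1 [simp]: "cadj (mat 1) = mat 1"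
  by (simp add: cadj_def vec_eq_iff mat_def)

lemma cadj_zero [simp]: "cadj 0 = 0"
  by (simp add: cadj_def vec_eq_iff)

lemma cadj_diff: "cadj (A - B) = cadj A - cadj B"
  by (simp add: cadj_def vec_eq_iff)

lemma matrix_mul_lzero [simp]: "(0 :: 'a::semiring_1^'n^'m) ** A = 0"
  by (simp add: matrix_matrix_mult_def vec_eq_iff)

lemma matrix_mul_diff_rdistrib: "(A - B) ** C = A ** C - B ** (C :: 'a::ring_1^_^_)"
  by (simp add: matrix_matrix_mult_def vec_eq_iff sum_subtractf algebra_simps)

lemma matrix_mul_diff_ldistrib: "C ** (A - B) = C ** A - C ** (B :: 'a::ring_1^_^_)"
  by (simp add: matrix_matrix_mult_def vec_eq_iff sum_subtractf algebra_simps)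

lemma mpow_Suc_right: "mpow A (Suc k) = mpow A k ** A"
  by (induction k) (simp_all add: matrix_mul_assoc)

lemma mpow_add: "mpow A (i + j) = mpow A i ** mpow A j"
  by (induction i) (simp_all add: matrix_mul_assoc)

lemma mpow_2: "mpow A 2 = A ** A"
  by (simp add: numeral_2_eq_2)

lemma mpow_commute: "mpow A i ** mpow A j = mpow A j ** mpow A i"
  by (metis mpow_add add.commute)

lemma mult_mpow_commute: "A ** mpow A k = mpow A k ** A"
  by (metis mpow.simps(2) mpow_Suc_right)

lemma matrix_vector_mult_axis: "(A *v axis j 1) $ i = (A $ i $ j :: 'a::semiring_1)"
  by (simp add: matrix_vector_mult_def axis_def if_distrib cong: if_cong)

lemma matrix_of_columns_axis: "(\<chi> i j. c j $ i) *v axis j 1 = (c j :: 'a::semiring_1^'m)"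
  by (simp add: vec_eq_iff matrix_vector_mult_axis)

lemma matrix_eqI_columns:
  fixes M N :: "'a::semiring_1^'n^'m"
  assumes "\<And>j. M *v axis j 1 = N *v axis j 1"
  shows "M = N"
  using assms by (simp add: vec_eq_iff) (metis matrix_vector_mult_axis)

lemma colsp_subset_iff: "colsp A \<subseteq> colsp B \<longleftrightarrow> (\<exists>Y. A = B ** Y)"
proof
  assume "colsp A \<subseteq> colsp B"
  then have "\<forall>j. \<exists>y. A *v axis j 1 = B *v y"
    unfolding colsp_def by blast
  then obtain y where y: "\<And>j. A *v axis j 1 = B *v y j"
    by metis
  have "A = B ** (\<chi> i j. y j $ i)"
    by (rule matrix_eqI_columns)
      (simp add: y matrix_of_columns_axis flip: matrix_vector_mul_assoc)
  then show "\<exists>Y. A = B ** Y" ..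
next
  assume "\<exists>Y. A = B ** Y"
  then show "colsp A \<subseteq> colsp B"
    unfolding colsp_def by (auto simp flip: matrix_vector_mul_assoc)
qed

lemma colsp_eq_iff: "colsp A = colsp B \<longleftrightarrow> (\<exists>Y. A = B ** Y) \<and> (\<exists>Z. B = A ** Z)"
  by (simp add: set_eq_subset colsp_subset_iff)

lemma colsp_mult_subset: "colsp (A ** B) \<subseteq> colsp A"
  using colsp_subset_iff by blast

lemma colsp_mult_cong: "colsp M = colsp N \<Longrightarrow> colsp (A ** M) = colsp (A ** N)"
  unfolding colsp_eq_iff by (metis matrix_mul_assoc)

lemma subspace_colsp: "subspace (colsp A)"
  unfolding colsp_def by (metis linear_subspace_image matrix_vector_mul_linear subspace_UNIV)

section \<open>Orthogonal projectors and the Moore--Penrose inverse\<close>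

definition is_orth_proj :: "complex^'n^'n \<Rightarrow> bool" where
  "is_orth_proj P \<longleftrightarrow> cadj P = P \<and> P ** P = P"

lemma idempotent_mult_eq_if_colsp_subset:
  assumes "P ** P = P" "colsp M \<subseteq> colsp P"
  shows "P ** M = M"
  using assms by (metis colsp_subset_iff matrix_mul_assoc)

lemma orth_proj_eqI_colsp:
  assumes "is_orth_proj P" "is_orth_proj Q" "colsp P = colsp Q"
  shows "P = Q"
proof -
  have "P ** Q = Q" "Q ** P = P"
    using assms idempotent_mult_eq_if_colsp_subset unfolding is_orth_proj_def by auto
  then show ?thesis
    using assms unfolding is_orth_proj_def by (metis cadj_mult)
qed

lemma orth_proj_eq_0_if_trace_eq_0:
  assumes "is_orth_proj E" "trace E = 0"
  shows "E = 0"
proof -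
  have "trace E = trace (cadj E ** E)"
    using assms(1) unfolding is_orth_proj_def by simp
  also have "\<dots> = (\<Sum>i\<in>UNIV. \<Sum>k\<in>UNIV. E $ k $ i * cnj (E $ k $ i))"
    by (simp add: trace_def matrix_matrix_mult_def cadj_def mult.commute)
  also have "\<dots> = of_real (\<Sum>i\<in>UNIV. \<Sum>k\<in>UNIV. (norm (E $ k $ i))\<^sup>2)"
    by (simp only: of_real_sum complex_norm_square)
  finally have "(\<Sum>i\<in>UNIV. \<Sum>k\<in>UNIV. (norm (E $ k $ i))\<^sup>2) = 0"
    using assms(2) of_real_eq_0_iff by metis
  then have "\<forall>i k. (norm (E $ k $ i))\<^sup>2 = 0"
    by (simp add: sum_nonneg sum_nonneg_eq_0_iff)
  then show ?thesis
    by (simp add: vec_eq_iff)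
qed

text \<open>A rank argument without dimensions: \<open>P - Q\<close> is again an orthogonal projector, and
  one of trace zero vanishes since \<open>tr(E\<^sup>* E)\<close> is the sum of the squared moduli of the entries.\<close>

lemma orth_proj_eqI_trace:
  assumes P: "is_orth_proj P" and Q: "is_orth_proj Q"
    and "colsp Q \<subseteq> colsp P" "trace P = trace Q"
  shows "P = Q"
proof -
  have PQ: "P ** Q = Q"
    using P assms(3) idempotent_mult_eq_if_colsp_subset unfolding is_orth_proj_def by blast
  then have QP: "Q ** P = Q"
    using P Q unfolding is_orth_proj_def by (metis cadj_mult)
  have "is_orth_proj (P - Q)"
    using P Q PQ QP
    by (simp add: is_orth_proj_def cadj_diff matrix_mul_diff_rdistrib matrix_mul_diff_ldistrib)
  moreover have "trace (P - Q) = 0"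
    using assms(4) by (simp add: trace_sub)
  ultimately show ?thesis
    using orth_proj_eq_0_if_trace_eq_0 by fastforce
qed

lemma inner_matrix_vector_mult_cadj:
  fixes A :: "complex^'n^'m"
  shows "inner z (A *v w) = inner (cadj A *v z) w"
proof -
  have "inner z (A *v w) = (\<Sum>i\<in>UNIV. \<Sum>k\<in>UNIV. inner (z $ i) (A $ i $ k * w $ k))"
    by (simp add: inner_vec_def matrix_vector_mult_def inner_sum_right)
  also have "\<dots> = (\<Sum>k\<in>UNIV. \<Sum>i\<in>UNIV. inner (cnj (A $ i $ k) * z $ i) (w $ k))"
    by (subst sum.swap) (simp add: inner_complex_def algebra_simps)
  also have "\<dots> = inner (cadj A *v z) w"
    by (simp add: inner_vec_def matrix_vector_mult_def inner_sum_left cadj_def)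
  finally show ?thesis .
qed

lemma normal_equation_solvable:
  fixes A :: "complex^'n^'m"
  shows "\<exists>c. cadj A *v (b - A *v c) = 0"
proof -
  have span: "span (colsp A) = colsp A"
    using subspace_colsp span_eq_iff by blast
  obtain y z where y: "y \<in> colsp A" and z: "\<And>w. w \<in> colsp A \<Longrightarrow> orthogonal z w"
    and b: "b = y + z"
    using orthogonal_subspace_decomp_exists[of "colsp A" b] unfolding span by metis
  obtain c where c: "y = A *v c"
    using y unfolding colsp_def by auto
  have "inner z (A *v (cadj A *v z)) = 0"
    using z orthogonal_def unfolding colsp_def by blast
  then have "cadj A *v z = 0"
    by (metis inner_matrix_vector_mult_cadj inner_eq_zero_iff)
  then have "cadj A *v (b - A *v c) = 0"
    using b c by simp
  then show ?thesis ..
qed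

lemma ex_orth_proj_onto_colsp:
  fixes A :: "complex^'n^'m"
  shows "\<exists>C. is_orth_proj (A ** C) \<and> A ** C ** A = A"
proof -
  have "\<forall>j. \<exists>c. cadj A *v (axis j 1 - A *v c) = 0"
    using normal_equation_solvable by blast
  then obtain c where c: "\<And>j. cadj A *v (axis j 1 - A *v c j) = 0"
    by metis
  define C where "C = (\<chi> i j. c j $ i)"
  have "cadj A ** (mat 1 - A ** C) = 0"
    by (rule matrix_eqI_columns)
      (simp add: c C_def matrix_of_columns_axis matrix_vector_mult_diff_rdistrib
        flip: matrix_vector_mul_assoc)
  then have "cadj (mat 1 - A ** C) ** A = 0"
    by (metis cadj_cadj cadj_mult cadj_zero)
  then have A: "cadj (A ** C) ** A = A"
    by (simp add: cadj_diff matrix_mul_diff_rdistrib)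
  then have "cadj (A ** C) ** (A ** C) = A ** C"
    by (simp add: matrix_mul_assoc)
  then have "cadj (A ** C) = A ** C"
    by (metis cadj_cadj cadj_mult)
  then show ?thesis
    using A \<open>cadj (A ** C) ** (A ** C) = A ** C\<close> unfolding is_orth_proj_def by auto
qed

lemma ex_MP_inverse:
  fixes A :: "complex^'n^'m"
  shows "\<exists>X. is_MP_inverse A X"
proof -
  obtain C where C: "is_orth_proj (A ** C)" "A ** C ** A = A"
    using ex_orth_proj_onto_colsp by blast
  obtain D where D: "is_orth_proj (cadj A ** D)" "cadj A ** D ** cadj A = cadj A"
    using ex_orth_proj_onto_colsp by blast
  define Q where "Q = cadj A ** D"
  have Q_herm: "cadj Q = Q" and Q_idem: "Q ** Q = Q"
    using D(1) unfolding Q_def is_orth_proj_def by auto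
  have AQ: "A ** Q = A"
    using D(2) Q_herm unfolding Q_def by (metis cadj_cadj cadj_mult)
  have Q_eq: "Q = cadj D ** A"
    using Q_herm unfolding Q_def by (metis cadj_cadj cadj_mult)
  have AX: "A ** (Q ** C) = A ** C"
    using AQ by (simp add: matrix_mul_assoc)
  have XA: "Q ** C ** A = Q"
    using C(2) Q_eq by (metis matrix_mul_assoc)
  show ?thesis
  proof (intro exI)
    show "is_MP_inverse A (Q ** C)"
      unfolding is_MP_inverse_def
      using AX XA C Q_herm Q_idem
      by (simp add: is_orth_proj_def matrix_mul_assoc)
  qed
qed

lemma MP_inverse_unique:
  assumes X: "is_MP_inverse A X" and Y: "is_MP_inverse A Y"
  shows "X = Y"
proof -
  have x1: "A ** X ** A = A" and x2: "X ** A ** X = X"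
    and x3: "cadj (A ** X) = A ** X" and x4: "cadj (X ** A) = X ** A"
    using X unfolding is_MP_inverse_def by auto
  have y1: "A ** Y ** A = A" and y2: "Y ** A ** Y = Y"
    and y3: "cadj (A ** Y) = A ** Y" and y4: "cadj (Y ** A) = Y ** A"
    using Y unfolding is_MP_inverse_def by auto
  have "X = X ** cadj (A ** X)"
    using x2 x3 by (simp add: matrix_mul_assoc)
  also have "\<dots> = X ** cadj X ** cadj (A ** Y ** A)"
    using y1 by (simp add: cadj_mult matrix_mul_assoc)
  also have "\<dots> = X ** cadj (A ** X) ** cadj (A ** Y)"
    by (simp add: cadj_mult matrix_mul_assoc)
  also have "\<dots> = X ** A ** Y"
    using x2 x3 y3 by (simp add: matrix_mul_assoc)
  finally have X_eq: "X = X ** A ** Y" .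
  have "Y = cadj (Y ** A) ** Y"
    using y2 y4 by simp
  also have "\<dots> = cadj (A ** X ** A) ** cadj Y ** Y"
    using x1 by (simp add: cadj_mult)
  also have "\<dots> = cadj (X ** A) ** cadj (Y ** A) ** Y"
    by (simp add: cadj_mult matrix_mul_assoc)
  also have "\<dots> = X ** A ** (Y ** A ** Y)"
    using x4 y4 by (simp add: matrix_mul_assoc)
  also have "\<dots> = X ** A ** Y"
    using y2 by simp
  finally show ?thesis
    using X_eq by simp
qed

lemma is_MP_inverse_MP: "is_MP_inverse A (MP A)"
  unfolding MP_def using ex_MP_inverse MP_inverse_unique by (metis theI)

lemma MP_Penrose_equations:
  shows "A ** MP A ** A = A" "MP A ** A ** MP A = MP A"
    "cadj (A ** MP A) = A ** MP A" "cadj (MP A ** A) = MP A ** A"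
  using is_MP_inverse_MP[of A] unfolding is_MP_inverse_def by auto

lemma is_orth_proj_mult_MP: "is_orth_proj (A ** MP A)"
  by (simp add: is_orth_proj_def MP_Penrose_equations matrix_mul_assoc)

lemma is_orth_proj_MP_mult: "is_orth_proj (MP A ** A)"
  by (simp add: is_orth_proj_def MP_Penrose_equations matrix_mul_assoc)

lemma colsp_mult_MP: "colsp (A ** MP A) = colsp A"
  unfolding colsp_eq_iff by (metis MP_Penrose_equations(1))

lemma colsp_MP_mult: "colsp (MP A ** A) = colsp (cadj A)"
proof -
  have "MP A ** A = cadj A ** cadj (MP A)"
    using MP_Penrose_equations(4)[of A] by (simp add: cadj_mult)
  moreover have "cadj A = MP A ** A ** cadj A"
  proof -
    have "cadj A = cadj (A ** (MP A ** A))"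
      using MP_Penrose_equations(1)[of A] by (simp add: matrix_mul_assoc)
    then show ?thesis
      using MP_Penrose_equations(4)[of A] by (simp add: cadj_mult)
  qed
  ultimately show ?thesis
    using colsp_eq_iff by metis
qed

lemma is_orth_proj_projA: "is_orth_proj (projA A)"
  unfolding projA_def by (rule is_orth_proj_mult_MP)

lemma cadj_projA: "cadj (projA A) = projA A"
  using is_orth_proj_projA unfolding is_orth_proj_def by blast

lemma projA_idem: "projA A ** projA A = projA A"
  using is_orth_proj_projA unfolding is_orth_proj_def by blast

lemma projA_mult: "projA A ** A = A"
  unfolding projA_def using MP_Penrose_equations(1) .

lemma projA_eqI_colsp: "colsp M = colsp N \<Longrightarrow> projA M = projA N"
  unfolding projA_def by (simp add: orth_proj_eqI_colsp is_orth_proj_mult_MP colsp_mult_MP)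

lemma is_EP_if_colsp_cadj_subset:
  assumes "colsp (cadj A) \<subseteq> colsp A"
  shows "is_EP A"
proof -
  have "A ** MP A = MP A ** A"
    using assms trace_mul_sym[of A "MP A"]
    by (intro orth_proj_eqI_trace)
      (simp_all add: is_orth_proj_mult_MP is_orth_proj_MP_mult colsp_mult_MP colsp_MP_mult)
  then show ?thesis
    unfolding is_EP_def by (metis colsp_mult_MP colsp_MP_mult)
qed

text \<open>\<open>A\<close> is injective on \<open>colsp B\<close> when it does not shrink it: the projectors
  \<open>B\<^sup>\<dagger>B\<close> and \<open>(AB)\<^sup>\<dagger>AB\<close> are nested and have equal trace.\<close>

lemma mult_left_cancel_if_colsp_mult_eq:
  fixes A :: "complex^'n^'n" and B :: "complex^'k^'n" and S T :: "complex^'l^'k"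
  assumes "colsp (A ** B) = colsp B" "A ** B ** S = A ** B ** T"
  shows "B ** S = B ** T"
proof -
  let ?N = "A ** B"
  have "MP B ** B = MP ?N ** ?N"
  proof (rule orth_proj_eqI_trace)
    show "colsp (MP ?N ** ?N) \<subseteq> colsp (MP B ** B)"
      by (simp add: colsp_MP_mult cadj_mult colsp_mult_subset)
    have "B ** MP B = ?N ** MP ?N"
      using assms(1) by (simp add: orth_proj_eqI_colsp is_orth_proj_mult_MP colsp_mult_MP)
    then show "trace (MP B ** B) = trace (MP ?N ** ?N)"
      by (metis trace_mul_sym)
  qed (simp_all add: is_orth_proj_MP_mult)
  then have B_eq: "B ** MP ?N ** A ** B = B"
    using MP_Penrose_equations(1)[of B] by (simp add: matrix_mul_assoc[symmetric])
  have "B ** M = B ** MP ?N ** (?N ** M)" for M :: "complex^'l^'k"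
    by (simp only: matrix_mul_assoc B_eq)
  then show ?thesis
    using assms(2) by metis
qed

section \<open>The index and the core-EP inverse\<close>

lemma ex_colsp_mpow_eq_Suc:
  fixes A :: "complex^'n^'n"
  shows "\<exists>k. colsp (mpow A k) = colsp (mpow A (Suc k))"
proof (rule ccontr)
  assume "\<not> ?thesis"
  then have "colsp (mpow A (Suc k)) \<subset> colsp (mpow A k)" for k
    by (metis mpow_Suc_right colsp_mult_subset psubsetI)
  then have dim_less: "dim (colsp (mpow A (Suc k))) < dim (colsp (mpow A k))" for k
    by (metis dim_psubset span_eq_iff subspace_colsp)
  have "dim (colsp (mpow A k)) + k \<le> dim (colsp (mpow A 0))" for k
  proof (induction k)
    case (Suc k)
    then show ?case
      using dim_less[of k] by simp
  qed simp
  moreover have "dim (colsp (mpow A 0)) \<le> DIM(complex^'n)"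
    by (rule dim_subset_UNIV)
  ultimately show False
    by (metis le_add2 order_trans not_less_eq_eq)
qed

lemma colsp_mpow_Suc_ind: "colsp (mpow A (Suc (ind A))) = colsp (mpow A (ind A))"
  unfolding ind_def using LeastI_ex[OF ex_colsp_mpow_eq_Suc[of A]] by simp

lemma colsp_mpow_antimono: "i \<le> j \<Longrightarrow> colsp (mpow A j) \<subseteq> colsp (mpow A i)"
  by (metis le_add_diff_inverse mpow_add colsp_mult_subset)

lemma colsp_mpow_eq_if_ge_ind:
  assumes "ind A \<le> j"
  shows "colsp (mpow A j) = colsp (mpow A (ind A))"
  using assms
proof (induction j rule: dec_induct)
  case (step j)
  then have "colsp (mpow A (Suc j)) = colsp (A ** mpow A (ind A))"
    using colsp_mult_cong by simp
  then show ?case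
    using colsp_mpow_Suc_ind by simp
qed simp

lemma colsp_mpow_ind_subset: "colsp (mpow A (ind A)) \<subseteq> colsp (mpow A j)"
  using colsp_mpow_eq_if_ge_ind[of A "ind A + j"] colsp_mpow_antimono[of j "ind A + j" A]
  by simp

lemma ind_le_oneI:
  assumes "colsp A \<subseteq> colsp (A ** A)"
  shows "ind A \<le> 1"
proof -
  have "colsp (mpow A 1) = colsp (mpow A (Suc 1))"
    using assms colsp_mult_subset[of A A] by simp
  then show ?thesis
    unfolding ind_def by (rule Least_le)
qed

lemma colsp_mpow_ind_if_ind_le_one: "ind A \<le> 1 \<Longrightarrow> colsp (mpow A (ind A)) = colsp A"
  using colsp_mpow_eq_if_ge_ind[of A 1] by simp

lemma ind_le_one_if_EP:
  assumes "is_EP A"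
  shows "ind A \<le> 1"
proof (rule ind_le_oneI)
  obtain Z where Z: "cadj A = A ** Z"
    using assms colsp_eq_iff unfolding is_EP_def by metis
  have "A = A ** cadj (MP A ** A)"
    using MP_Penrose_equations(1,4)[of A] by (simp add: matrix_mul_assoc)
  also have "\<dots> = A ** A ** (Z ** cadj (MP A))"
    using Z by (simp add: cadj_mult matrix_mul_assoc)
  finally show "colsp A \<subseteq> colsp (A ** A)"
    using colsp_subset_iff by blast
qed

definition is_coreEP :: "complex^'n^'n \<Rightarrow> complex^'n^'n \<Rightarrow> bool" where
  "is_coreEP A X \<longleftrightarrow> X ** A ** X = X \<and> colsp X = colsp (cadj X)
     \<and> colsp X = colsp (mpow A (ind A))"

lemma ex_mpow_ind_eq_mult: "\<exists>Y. mpow A (ind A) = A ** mpow A (ind A) ** Y"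
proof -
  have "colsp (A ** mpow A (ind A)) = colsp (mpow A (ind A))"
    using colsp_mpow_Suc_ind[of A] by simp
  then show ?thesis
    unfolding colsp_eq_iff by blast
qed

lemma is_coreEPD:
  assumes "is_coreEP A X"
  defines "B \<equiv> mpow A (ind A)"
  shows "X ** projA B = X" "X ** A ** B = B" "A ** X = projA B" "\<exists>V. X = B ** V"
proof -
  have XAX: "X ** A ** X = X" and X: "colsp X = colsp B" and X_adj: "colsp (cadj X) = colsp B"
    using assms unfolding is_coreEP_def B_def by auto
  obtain V Z where V: "X = B ** V" and Z: "B = X ** Z"
    using X colsp_eq_iff by blast
  obtain Y where Y: "B = A ** B ** Y"
    using ex_mpow_ind_eq_mult B_def by blast
  have P: "cadj (projA B) = projA B" "projA B ** projA B = projA B"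
    using is_orth_proj_projA[of B] unfolding is_orth_proj_def by auto
  have PX: "projA B ** cadj X = cadj X"
    using P(2) by (rule idempotent_mult_eq_if_colsp_subset) (simp add: projA_def colsp_mult_MP X_adj)
  have "X ** projA B = cadj (projA B ** cadj X)"
    using P by (simp add: cadj_mult)
  then show XP: "X ** projA B = X"
    using PX by simp
  show XAB: "X ** A ** B = B"
    using XAX Z by (simp add: matrix_mul_assoc)
  have "A ** X ** B = A ** X ** (A ** B ** Y)"
    using arg_cong[where f = "\<lambda>M. A ** X ** M", OF Y] .
  also have "\<dots> = A ** (X ** A ** B) ** Y"
    by (simp add: matrix_mul_assoc)
  also have "\<dots> = B"
    using XAB Y[symmetric] by simp
  finally have AXB: "A ** X ** B = B" .
  have "A ** X = A ** (X ** projA B)"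
    using XP by simp
  also have "\<dots> = A ** X ** B ** MP B"
    by (simp add: projA_def matrix_mul_assoc)
  also have "\<dots> = projA B"
    using AXB by (simp add: projA_def)
  finally show "A ** X = projA B" .
  show "\<exists>V. X = B ** V"
    using V ..
qed

lemma is_coreEP_unique:
  assumes "is_coreEP A X1" "is_coreEP A X2"
  shows "X1 = X2"
proof -
  obtain V where V: "X2 = mpow A (ind A) ** V"
    using is_coreEPD(4)[OF assms(2)] by blast
  have "X1 = X1 ** (A ** X2)"
    using is_coreEPD(1)[OF assms(1)] is_coreEPD(3)[OF assms(2)] by simp
  also have "\<dots> = X1 ** A ** mpow A (ind A) ** V"
    using V by (simp add: matrix_mul_assoc)
  also have "\<dots> = X2"
    using is_coreEPD(2)[OF assms(1)] V by simp
  finally show ?thesis .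
qed

text \<open>The candidate is \<open>X = B Y B\<^sup>\<dagger>\<close> for \<open>B = A\<^sup>k = A B Y\<close>; the range of \<open>X\<close>
  reaches all of \<open>colsp B\<close> because \<open>A\<close> is injective there.\<close>

lemma ex_is_coreEP: "\<exists>X. is_coreEP A X"
proof -
  define B where "B = mpow A (ind A)"
  obtain Y where Y: "B = A ** B ** Y"
    using ex_mpow_ind_eq_mult B_def by blast
  define X where "X = B ** Y ** MP B"
  have AX: "A ** X = projA B"
    unfolding X_def projA_def by (simp add: matrix_mul_assoc Y[symmetric])
  have XP: "X ** projA B = X"
    using MP_Penrose_equations(2)[of B] unfolding X_def projA_def
    by (simp add: matrix_mul_assoc[symmetric])
  have "A ** B ** (Y ** MP B ** A ** B) = projA B ** A ** B"
    unfolding projA_def by (simp add: matrix_mul_assoc Y[symmetric])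
  also have "\<dots> = projA B ** B ** A"
    using mult_mpow_commute[of A "ind A"] unfolding B_def by (simp add: matrix_mul_assoc[symmetric])
  also have "\<dots> = A ** B ** mat 1"
    using mult_mpow_commute[of A "ind A"] unfolding B_def by (simp add: projA_mult)
  finally have "A ** B ** (Y ** MP B ** A ** B) = A ** B ** mat 1" .
  moreover have "colsp (A ** B) = colsp B"
    using colsp_mpow_Suc_ind[of A] unfolding B_def by simp
  ultimately have "B ** (Y ** MP B ** A ** B) = B ** mat 1"
    using mult_left_cancel_if_colsp_mult_eq by blast
  then have BX: "B = X ** (A ** B)"
    unfolding X_def by (simp add: matrix_mul_assoc)
  have "X ** A ** X = X"
    using AX XP by (simp add: matrix_mul_assoc[symmetric])
  moreover have "colsp X = colsp B"
  proof -
    have "X = B ** (Y ** MP B)"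
      by (simp add: X_def matrix_mul_assoc)
    then show ?thesis
      using BX colsp_eq_iff by metis
  qed
  moreover have "colsp (cadj X) = colsp B"
  proof -
    have "cadj X = cadj (X ** projA B)"
      using XP by simp
    also have "\<dots> = B ** (MP B ** cadj X)"
      by (simp add: cadj_mult cadj_projA) (simp add: projA_def matrix_mul_assoc)
    finally have "cadj X = B ** (MP B ** cadj X)" .
    moreover have "B = cadj X ** (cadj A ** B)"
    proof -
      have "cadj X ** (cadj A ** B) = cadj (A ** X) ** B"
        by (simp add: cadj_mult matrix_mul_assoc)
      then show ?thesis
        using AX by (simp add: projA_def MP_Penrose_equations(1,3))
    qed
    ultimately show ?thesis
      using colsp_eq_iff by metis
  qed
  ultimately show ?thesis
    unfolding is_coreEP_def B_def by auto
qed

lemma is_coreEP_coreEP: "is_coreEP A (coreEP A)"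
proof -
  have "coreEP A = (THE X. is_coreEP A X)"
    unfolding coreEP_def is_coreEP_def ..
  then show ?thesis
    using ex_is_coreEP is_coreEP_unique by (metis theI)
qed

lemma coreEP_eqI: "is_coreEP A X \<Longrightarrow> coreEP A = X"
  using is_coreEP_coreEP is_coreEP_unique by blast

lemma is_coreEP_mpow_cancel:
  assumes "is_coreEP A X"
  shows "mpow X i ** mpow A i ** mpow A (ind A) = mpow A (ind A)"
proof (induction i)
  case (Suc i)
  let ?B = "mpow A (ind A)"
  have "mpow X (Suc i) ** mpow A (Suc i) ** ?B = mpow X i ** (X ** A ** ?B) ** mpow A i"
    unfolding mpow_Suc_right[of X i] mpow.simps(2)[of A i]
    by (simp add: mpow_commute[of A i] matrix_mul_assoc[symmetric])
  also have "\<dots> = mpow X i ** mpow A i ** ?B"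
    using is_coreEPD(2)[OF assms]
    by (simp add: mpow_commute[of A i] matrix_mul_assoc[symmetric])
  finally show ?case
    using Suc.IH by simp
qed simp

section \<open>The weak core inverse\<close>

lemma wcore_mult_mpow_ind: "wcore m A ** A ** mpow A (ind A) = mpow A (ind A)"
proof -
  let ?B = "mpow A (ind A)" and ?X = "coreEP A"
  have "colsp (A ** ?B) \<subseteq> colsp (projA (mpow A m))"
    using colsp_mpow_Suc_ind[of A] colsp_mpow_ind_subset[of A m]
    by (simp add: projA_def colsp_mult_MP)
  with projA_idem have P: "projA (mpow A m) ** (A ** ?B) = A ** ?B"
    by (rule idempotent_mult_eq_if_colsp_subset)
  have "wcore m A ** A ** ?B = mpow ?X (m + 1) ** mpow A m ** (projA (mpow A m) ** (A ** ?B))"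
    unfolding wcore_def WG_def by (simp only: matrix_mul_assoc)
  also have "\<dots> = mpow ?X (Suc m) ** mpow A (Suc m) ** ?B"
    unfolding P mpow_Suc_right[of A m] by (simp only: matrix_mul_assoc Suc_eq_plus1)
  also have "\<dots> = ?B"
    by (rule is_coreEP_mpow_cancel[OF is_coreEP_coreEP])
  finally show ?thesis .
qed

lemma colsp_wcore_subset: "colsp (wcore m A) \<subseteq> colsp (mpow A (ind A))"
proof -
  have "wcore m A = coreEP A ** (mpow (coreEP A) m ** mpow A m ** projA (mpow A m))"
    unfolding wcore_def WG_def by (simp add: matrix_mul_assoc)
  then have "colsp (wcore m A) \<subseteq> colsp (coreEP A)"
    using colsp_subset_iff by blast
  then show ?thesis
    using is_coreEP_coreEP[of A] unfolding is_coreEP_def by blast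
qed

text \<open>When \<open>Ind(A) \<le> 1\<close>, every power \<open>A\<^sup>m\<close> with \<open>m \<ge> 1\<close> has the range of
  \<open>A\<^sup>k\<close>, so its orthogonal projector is \<open>A X\<close> and the weak core inverse collapses to
  \<open>X\<^sup>m\<^sup>+\<^sup>1 A\<^sup>m\<^sup>+\<^sup>1 X = X\<close>.\<close>

lemma wcore_eq_coreEP:
  assumes "ind A \<le> 1" "1 \<le> m"
  shows "wcore m A = coreEP A"
proof -
  define X where "X = coreEP A"
  let ?B = "mpow A (ind A)"
  have X: "is_coreEP A X"
    unfolding X_def by (rule is_coreEP_coreEP)
  obtain V where V: "X = ?B ** V"
    using is_coreEPD(4)[OF X] by blast
  have "colsp (mpow A m) = colsp ?B"
    using assms colsp_mpow_eq_if_ge_ind[of A m] by simp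
  then have "projA (mpow A m) = projA ?B"
    by (rule projA_eqI_colsp)
  also have "\<dots> = A ** X"
    using is_coreEPD(3)[OF X] by simp
  finally have "wcore m A = mpow X (m + 1) ** mpow A m ** (A ** X)"
    unfolding wcore_def WG_def X_def by simp
  also have "\<dots> = mpow X (m + 1) ** mpow A (m + 1) ** X"
    by (simp only: Suc_eq_plus1[symmetric] mpow_Suc_right matrix_mul_assoc)
  also have "\<dots> = mpow X (m + 1) ** mpow A (m + 1) ** ?B ** V"
    using arg_cong[where f = "\<lambda>M. mpow X (m + 1) ** mpow A (m + 1) ** M", OF V]
    by (simp only: matrix_mul_assoc)
  also have "\<dots> = X"
    using is_coreEP_mpow_cancel[OF X, of "m + 1"] V by simp
  finally show ?thesis
    unfolding X_def .
qed

lemma wcore_eq_iff_is_coreEP: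
  "ind A \<le> 1 \<Longrightarrow> 1 \<le> m \<Longrightarrow> wcore m A = Y \<longleftrightarrow> is_coreEP A Y"
  using wcore_eq_coreEP coreEP_eqI is_coreEP_coreEP by metis

lemma ind_le_one_if_colsp_subset_wcore:
  assumes "colsp A \<subseteq> colsp (wcore m A)"
  shows "ind A \<le> 1"
proof (rule ind_le_oneI)
  show "colsp A \<subseteq> colsp (A ** A)"
    using assms colsp_wcore_subset[of m A] colsp_mpow_ind_subset[of A 2]
    by (simp add: mpow_2)
qed

lemma wcore_eq_0_iff: "wcore m A = 0 \<longleftrightarrow> mpow A (ind A) = 0"
proof
  show "mpow A (ind A) = 0" if "wcore m A = 0"
    using wcore_mult_mpow_ind[of m A] that by simp
next
  assume B: "mpow A (ind A) = 0"
  obtain V where "coreEP A = mpow A (ind A) ** V"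
    using is_coreEPD(4)[OF is_coreEP_coreEP[of A]] by blast
  then have "coreEP A = 0"
    using B by simp
  then show "wcore m A = 0"
    unfolding wcore_def WG_def by simp
qed

lemma wcore_eq_self_iff:
  assumes "1 \<le> m"
  shows "wcore m A = A \<longleftrightarrow> is_EP A \<and> tripotent A"
proof -
  have "ind A \<le> 1" if "wcore m A = A \<or> tripotent A"
    using that
  proof
    assume "wcore m A = A"
    then show ?thesis
      using ind_le_one_if_colsp_subset_wcore[of A m] by simp
  next
    assume "tripotent A"
    then have "A = A ** A ** A"
      unfolding tripotent_def by simp
    then show ?thesis
      using colsp_subset_iff ind_le_oneI by blast
  qed
  moreover have "is_coreEP A A \<longleftrightarrow> is_EP A \<and> tripotent A" if "ind A \<le> 1"
    using colsp_mpow_ind_if_ind_le_one[OF that]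
    unfolding is_coreEP_def is_EP_def tripotent_def by auto
  ultimately show ?thesis
    using wcore_eq_iff_is_coreEP[OF _ assms] by blast
qed

lemma wcore_eq_cadj_iff:
  assumes "1 \<le> m"
  shows "wcore m A = cadj A \<longleftrightarrow> is_EP A \<and> partial_isometry A"
proof -
  have "is_EP A" if "wcore m A = cadj A"
  proof (rule is_EP_if_colsp_cadj_subset)
    show "colsp (cadj A) \<subseteq> colsp A"
      using that colsp_wcore_subset[of m A] colsp_mpow_ind_subset[of A 1] by simp
  qed
  then have "ind A \<le> 1" if "wcore m A = cadj A \<or> is_EP A"
    using that ind_le_one_if_EP by blast
  moreover have "is_coreEP A (cadj A) \<longleftrightarrow> is_EP A \<and> partial_isometry A" if "ind A \<le> 1"
  proof -
    have "cadj (A ** cadj A ** A) = cadj A ** A ** cadj A"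
      by (simp add: cadj_mult matrix_mul_assoc)
    then have "cadj A ** A ** cadj A = cadj A \<longleftrightarrow> A ** cadj A ** A = A"
      by (metis cadj_cadj)
    then show ?thesis
      using colsp_mpow_ind_if_ind_le_one[OF that]
      unfolding is_coreEP_def is_EP_def partial_isometry_def by auto
  qed
  ultimately show ?thesis
    using wcore_eq_iff_is_coreEP[OF _ assms] by blast
qed

lemma wcore_eq_projA_iff:
  assumes "1 \<le> m"
  shows "wcore m A = projA A \<longleftrightarrow> idempotent_mat A"
proof -
  have "ind A \<le> 1" if "wcore m A = projA A \<or> idempotent_mat A"
    using that
  proof
    assume W: "wcore m A = projA A"
    have "A = projA A ** A"
      by (simp add: projA_mult)
    then have "colsp A \<subseteq> colsp (wcore m A)"
      unfolding W colsp_subset_iff by blast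
    then show ?thesis
      by (rule ind_le_one_if_colsp_subset_wcore)
  next
    assume "idempotent_mat A"
    then show ?thesis
      unfolding idempotent_mat_def by (intro ind_le_oneI) simp
  qed
  moreover have "is_coreEP A (projA A) \<longleftrightarrow> idempotent_mat A" if "ind A \<le> 1"
  proof -
    have "projA A ** A ** projA A = A ** A ** MP A"
      unfolding projA_mult by (simp add: projA_def matrix_mul_assoc)
    moreover have "A ** A ** MP A = A ** MP A \<longleftrightarrow> A ** A = A"
    proof
      assume AAM: "A ** A ** MP A = A ** MP A"
      have "A ** A = A ** A ** MP A ** A"
        by (simp add: MP_Penrose_equations(1)[unfolded matrix_mul_assoc[symmetric]]
            matrix_mul_assoc[symmetric])
      also have "\<dots> = A"
        using AAM by (simp add: MP_Penrose_equations(1))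
      finally show "A ** A = A" .
    qed simp
    ultimately show ?thesis
      using colsp_mpow_ind_if_ind_le_one[OF that] cadj_projA[of A] colsp_mult_MP[of A]
      unfolding is_coreEP_def idempotent_mat_def by (auto simp: projA_def)
  qed
  ultimately show ?thesis
    using wcore_eq_iff_is_coreEP[OF _ assms] by blast
qed

theorem theorem7p2:
  fixes A :: "complex^'n^'n" and m :: nat
  assumes "m \<ge> 1"
  shows "(wcore m A = 0 \<longleftrightarrow> mpow A (ind A) = 0)
       \<and> (wcore m A = A \<longleftrightarrow> is_EP A \<and> tripotent A)
       \<and> (wcore m A = cadj A \<longleftrightarrow> is_EP A \<and> partial_isometry A)
       \<and> (wcore m A = projA A \<longleftrightarrow> idempotent_mat A)"
  using wcore_eq_0_iff wcore_eq_self_iff[OF assms] wcore_eq_cadj_iff[OF assms]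
    wcore_eq_projA_iff[OF assms]
  by blast

end
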